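(* Let $P$ and $U$ be finite sets of points in $\mathbb{R}^d$ with $|P|=n_{\mathrm p}$, $|U|=n_{\mathrm u}$, let $\pi\in(0,1)$, $w_{\mathrm p}=\pi/n_{\mathrm p}$, $w_{\mathrm u}=1/n_{\mathrm u}$, and let $P'\subseteq P$, $U'\subseteq U$, not both empty. Let $W_{\mathrm p}=|P'|w_{\mathrm p}$, $W_{\mathrm n}=|U'|w_{\mathrm u}-|P'|w_{\mathrm p}$ and $v^*=\frac{W_{\mathrm p}}{W_{\mathrm p}+W_{\mathrm n}}$ (with $v^*=+\infty$ if $W_{\mathrm p}+W_{\mathrm n}=0$). For a loss $\ell$ define $$\hat R_{\mathrm{uPU}}(v;P',U')=\sum_{\mathbf{x}\in P'}w_{\mathrm p}\ell(v,+1)-\sum_{\mathbf{x}\in P'}w_{\mathrm p}\ell(v,-1)+\sum_{\mathbf{x}\in U'}w_{\mathrm u}\ell(v,-1),$$ $$\hat R_{\mathrm{nnPU}}(v;P',U')=\sum_{\mathbf{x}\in P'}w_{\mathrm p}\ell(v,+1)+\max\Bigl\{0,\sum_{\mathbf{x}\in U'}w_{\mathrm u}\ell(v,-1)-\sum_{\mathbf{x}\in P'}w_{\mathrm p}\ell(v,-1)\Bigr\}.$$ Suppose $\ell$ is any of the quadratic loss $(1-vy)^2$, the logistic loss $\ln(1+\exp(-vy))$, the savage loss $4/(1+\exp(vy))^2$, or the sigmoid loss $1/(1+\exp(vy))$. Then, for both $\hat R=\hat R_{\mathrm{uPU}}$ and $\hat R=\hat R_{\mathrm{nnPU}}$, the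 prediction $2\,\mathbb{1}(v^*>0.5)-1$ minimizes $\hat R(v;P',U')$ over $v\in\{-1,+1\}$.
   Context: $\mathbb{1}(\cdot)$ is the indicator function. The quantity $v^*$ is an estimate of the proportion of positive examples at a decision-tree node containing positive examples $P'$ and unlabeled examples $U'$. *)

theory Defs
  imports "HOL-Analysis.Analysis"
begin

definition quad_loss :: "real \<Rightarrow> real \<Rightarrow> real" where
  "quad_loss v y = (1 - v * y)^2"
definition logistic_loss :: "real \<Rightarrow> real \<Rightarrow> real" where
  "logistic_loss v y = ln (1 + exp (- (v * y)))"
definition savage_loss :: "real \<Rightarrow> real \<Rightarrow> real" where
  "savage_loss v y = 4 / (1 + exp (v * y))^2"
definition sigmoid_loss :: "real \<Rightarrow> real \<Rightarrow> real" where
  "sigmoid_loss v y = 1 / (1 + exp (v * y))"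

definition uPU_risk :: "(real \<Rightarrow> real \<Rightarrow> real) \<Rightarrow> real \<Rightarrow> real \<Rightarrow> 'a set \<Rightarrow> 'a set \<Rightarrow> real \<Rightarrow> real" where
  "uPU_risk l wp wu P' U' v =
     (\<Sum>x\<in>P'. wp * l v 1) - (\<Sum>x\<in>P'. wp * l v (-1)) + (\<Sum>x\<in>U'. wu * l v (-1))"

definition nnPU_risk :: "(real \<Rightarrow> real \<Rightarrow> real) \<Rightarrow> real \<Rightarrow> real \<Rightarrow> 'a set \<Rightarrow> 'a set \<Rightarrow> real \<Rightarrow> real" where
  "nnPU_risk l wp wu P' U' v =
     (\<Sum>x\<in>P'. wp * l v 1) + max 0 ((\<Sum>x\<in>U'. wu * l v (-1)) - (\<Sum>x\<in>P'. wp * l v (-1)))"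

definition vstar :: "real \<Rightarrow> real \<Rightarrow> 'a set \<Rightarrow> 'a set \<Rightarrow> ereal" where
  "vstar wp wu P' U' =
     (let Wp = real (card P') * wp; Wn = real (card U') * wu - real (card P') * wp
      in if Wp + Wn = 0 then \<infinity> else ereal (Wp / (Wp + Wn)))"

end

theory Submission
  imports Defs
begin

text \<open>All four losses are margin losses \<open>l v y = \<phi> (v * y)\<close> with \<open>0 \<le> \<phi> 1 \<le> \<phi> (-1)\<close>.
  With \<open>a = |P'| wp\<close> and \<open>b = |U'| wu\<close>, the uPU risk of \<open>v\<close> is
  \<open>a \<phi> v + (b - a) \<phi> (-v)\<close>, so predicting \<open>+1\<close> instead of \<open>-1\<close> changes it by
  \<open>(\<phi> (-1) - \<phi> 1) (b - 2a)\<close>, whose sign is that of \<open>1/2 - v*\<close> as \<open>v* = a / b\<close>.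
  The clipping in the nnPU risk is active only when \<open>b < a\<close>, where \<open>+1\<close> is optimal anyway.\<close>

lemma uPU_risk_margin:
  "uPU_risk (\<lambda>v y. \<phi> (v * y)) wp wu P' U' v =
     real (card P') * wp * \<phi> v + (real (card U') * wu - real (card P') * wp) * \<phi> (- v)"
  by (simp add: uPU_risk_def algebra_simps)

lemma nnPU_risk_margin:
  "nnPU_risk (\<lambda>v y. \<phi> (v * y)) wp wu P' U' v =
     real (card P') * wp * \<phi> v + max 0 ((real (card U') * wu - real (card P') * wp) * \<phi> (- v))"
  by (simp add: nnPU_risk_def algebra_simps)

lemma vstar_gt_half_iff:
  assumes "0 \<le> wu"
  shows "vstar wp wu P' U' > ereal (1/2) \<longleftrightarrow>
           real (card U') * wu = 0 \<or> real (card U') * wu < 2 * (real (card P') * wp)"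
proof -
  define a where "a = real (card P') * wp"
  define b where "b = real (card U') * wu"
  have "0 \<le> b" using assms by (simp add: b_def)
  moreover have "vstar wp wu P' U' = (if b = 0 then \<infinity> else ereal (a / b))"
    by (simp add: vstar_def a_def b_def Let_def)
  ultimately have "vstar wp wu P' U' > ereal (1/2) \<longleftrightarrow> b = 0 \<or> b < 2 * a"
    by (auto simp: field_simps)
  then show ?thesis
    by (simp add: a_def b_def)
qed

lemma margin_risks_le_if_le_twice:
  fixes a b A B :: real
  assumes "0 \<le> A" "A \<le> B" "0 \<le> a" "b \<le> 2 * a"
  shows "a * A + (b - a) * B \<le> a * B + (b - a) * A"
    and "a * A + max 0 ((b - a) * B) \<le> a * B + max 0 ((b - a) * A)"
proof -
  have "(B - A) * (b - 2 * a) \<le> 0"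
    using assms by (simp add: mult_nonneg_nonpos)
  then show le: "a * A + (b - a) * B \<le> a * B + (b - a) * A"
    by (simp add: algebra_simps)
  show "a * A + max 0 ((b - a) * B) \<le> a * B + max 0 ((b - a) * A)"
  proof (cases "a \<le> b")
    case True
    then show ?thesis using le assms by simp
  next
    case False
    then have "(b - a) * A \<le> 0" "(b - a) * B \<le> 0"
      using assms by (simp_all add: mult_nonpos_nonneg)
    moreover have "a * A \<le> a * B"
      using assms by (simp add: mult_left_mono)
    ultimately show ?thesis by simp
  qed
qed

lemma margin_risks_le_if_twice_le:
  fixes a b A B :: real
  assumes "0 \<le> A" "A \<le> B" "0 \<le> a" "2 * a \<le> b"
  shows "a * B + (b - a) * A \<le> a * A + (b - a) * B"
    and "a * B + max 0 ((b - a) * A) \<le> a * A + max 0 ((b - a) * B)"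
proof -
  have "0 \<le> (B - A) * (b - 2 * a)"
    using assms by simp
  then show le: "a * B + (b - a) * A \<le> a * A + (b - a) * B"
    by (simp add: algebra_simps)
  have "0 \<le> (b - a) * A" "0 \<le> (b - a) * B"
    using assms by simp_all
  then show "a * B + max 0 ((b - a) * A) \<le> a * A + max 0 ((b - a) * B)"
    using le by simp
qed

lemma margin_prediction_minimizes_risks:
  fixes \<phi> :: "real \<Rightarrow> real"
  defines "l \<equiv> \<lambda>v y. \<phi> (v * y)"
  assumes "0 \<le> \<phi> 1" "\<phi> 1 \<le> \<phi> (-1)" "0 \<le> wp" "0 \<le> wu"
  shows "let pred = 2 * of_bool (vstar wp wu P' U' > ereal (1/2)) - 1
         in \<forall>v \<in> {-1, 1::real}.
              uPU_risk l wp wu P' U' pred \<le> uPU_risk l wp wu P' U' v \<and>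
              nnPU_risk l wp wu P' U' pred \<le> nnPU_risk l wp wu P' U' v"
proof -
  define a where "a = real (card P') * wp"
  define b where "b = real (card U') * wu"
  have "0 \<le> a" "0 \<le> b" using assms by (simp_all add: a_def b_def)
  then consider (positive) "vstar wp wu P' U' > ereal (1/2)" "b \<le> 2 * a"
    | (negative) "\<not> vstar wp wu P' U' > ereal (1/2)" "2 * a \<le> b"
    using vstar_gt_half_iff[OF \<open>0 \<le> wu\<close>, of wp P' U'] unfolding a_def b_def by linarith
  then show ?thesis
  proof cases
    case positive
    with margin_risks_le_if_le_twice[of "\<phi> 1" "\<phi> (-1)" a b] assms \<open>0 \<le> a\<close> show ?thesis
      by (simp add: l_def uPU_risk_margin nnPU_risk_margin a_def b_def)
  next
    case negative
    with margin_risks_le_if_twice_le[of "\<phi> 1" "\<phi> (-1)" a b] assms \<open>0 \<le> a\<close> show ?thesis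
      by (simp add: l_def uPU_risk_margin nnPU_risk_margin a_def b_def)
  qed
qed

lemma margin_form_of_losses:
  assumes "l \<in> {quad_loss, logistic_loss, savage_loss, sigmoid_loss}"
  obtains \<phi> where "l = (\<lambda>v y. \<phi> (v * y))" and "0 \<le> \<phi> 1" and "\<phi> 1 \<le> \<phi> (-1)"
proof -
  consider "l = quad_loss" | "l = logistic_loss" | "l = savage_loss" | "l = sigmoid_loss"
    using assms by blast
  then show ?thesis
  proof cases
    case 1
    then show ?thesis
      by (intro that[of "\<lambda>z. (1 - z)^2"]) (simp_all add: quad_loss_def fun_eq_iff)
  next
    case 2
    have "ln (1 + exp (-1)) \<le> ln (1 + exp (1::real))"
      by (simp add: add_pos_pos)
    with 2 show ?thesis
      by (intro that[of "\<lambda>z. ln (1 + exp (- z))"]) (simp_all add: logistic_loss_def fun_eq_iff)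
  next
    case 3
    have "(1 + exp (-1::real))^2 \<le> (1 + exp 1)^2"
      by (rule power_mono) auto
    then have "4 / (1 + exp (1::real))^2 \<le> 4 / (1 + exp (-1))^2"
      by (intro divide_left_mono mult_pos_pos zero_less_power add_pos_pos) auto
    with 3 show ?thesis
      by (intro that[of "\<lambda>z. 4 / (1 + exp z)^2"]) (simp_all add: savage_loss_def fun_eq_iff)
  next
    case 4
    have "1 / (1 + exp (1::real)) \<le> 1 / (1 + exp (-1))"
      by (intro divide_left_mono) (auto simp: add_pos_pos)
    with 4 show ?thesis
      by (intro that[of "\<lambda>z. 1 / (1 + exp z)"]) (simp_all add: sigmoid_loss_def fun_eq_iff)
  qed
qed

theorem proposition4:
  fixes P U P' U' :: "(real ^ 'd) set" and \<pi> :: real and l :: "real \<Rightarrow> real \<Rightarrow> real"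
  assumes "finite P" and "finite U" and "P \<noteq> {}" and "U \<noteq> {}"
    and "0 < \<pi>" and "\<pi> < 1"
    and "P' \<subseteq> P" and "U' \<subseteq> U" and "P' \<noteq> {} \<or> U' \<noteq> {}"
    and "l \<in> {quad_loss, logistic_loss, savage_loss, sigmoid_loss}"
  shows "let wp = \<pi> / real (card P); wu = 1 / real (card U);
             pred = 2 * of_bool (vstar wp wu P' U' > ereal (1/2)) - 1
         in \<forall>v \<in> {-1, 1::real}.
              uPU_risk l wp wu P' U' pred \<le> uPU_risk l wp wu P' U' v \<and>
              nnPU_risk l wp wu P' U' pred \<le> nnPU_risk l wp wu P' U' v"
proof -
  obtain \<phi> where l: "l = (\<lambda>v y. \<phi> (v * y))" and "0 \<le> \<phi> 1" "\<phi> 1 \<le> \<phi> (-1)"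
    using margin_form_of_losses[OF \<open>l \<in> _\<close>] by blast
  moreover have "0 \<le> \<pi> / real (card P)" "0 \<le> 1 / real (card U)"
    using \<open>0 < \<pi>\<close> by simp_all
  ultimately show ?thesis
    unfolding l using margin_prediction_minimizes_risks by (simp only: Let_def)
qed

end
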